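(* Let $\mu$ be a $(C,\gamma)$-absolutely decaying measure on $\mathbb{R}^n$ with $K=\operatorname{supp}\mu$, let $0<\alpha<\frac{1}{2C^{1/\gamma}+1}$, let $S\subset\mathbb{R}^n$ be $\alpha$-winning on $K$, and let $S'\subset S$ be a countable union of affine hyperplanes (intersected with $S$). Then $S\setminus S'$ is $\alpha$-winning on $K$.
   Context: For a closed set $K\subset\mathbb{R}^n$ and $0<\alpha,\beta<1$, Schmidt's $(\alpha,\beta)$-game on $K$ with target set $S$: balls are $B(\mathbf{x},\rho)=\{\mathbf{x}'\in K: d(\mathbf{x},\mathbf{x}')\le\rho\}$ with $\mathbf{x}\in K$, $\rho>0$ ($d$ Euclidean), and $(\mathbf{x}_2,\rho_2)\le_s(\mathbf{x}_1,\rho_1)$ means $\rho_2+d(\mathbf{x}_1,\mathbf{x}_2)\le\rho_1$. Bob picks $\omega_1=(\mathbf{x}_1,\rho_1)$; then Alice and Bob alternately pick $\omega_k'=(\mathbf{x}_k',\rho_k')\le_s\omega_k$ and $\omega_{k+1}\le_s\omega_k'$, centers in $K$, with $\rho_k'=\alpha\rho_k$, $\rho_{k+1}=\beta\rho_k'$. The nested balls intersect in one point $\mathbf{x}_\infty$; Alice wins if $\mathbf{x}_\infty\in S$. $S$ is $(\alpha,\beta)$-winning on $K$ if Alice has a strategy guaranteeing $\mathbf{x}_\infty\in S\cap K$, and $\alpha$-winning on $K$ if this holds for every $\beta\in(0,1)$. A locally finite Borel measure $\mu$ on $\mathbb{R}^n$ is $(C,\gamma)$-absolutely decaying if there is $\rho_0>0$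 with $\mu(B(\mathbf{x},\rho)\cap\mathcal L^{(\varepsilon)})<C(\varepsilon/\rho)^\gamma\mu(B(\mathbf{x},\rho))$ for every affine hyperplane $\mathcal L$, $\mathbf{x}\in\operatorname{supp}\mu$, $0<\rho<\rho_0$, $\varepsilon>0$ (closed Euclidean balls; $\mathcal L^{(\varepsilon)}$ the closed $\varepsilon$-neighborhood of $\mathcal L$). *)

theory Defs
  imports "HOL-Analysis.Analysis"
begin

text \<open>A ball is encoded as a pair (center, radius); its points (in K) are
  {x' \<in> K. dist x x' \<le> \<rho>}.\<close>

definition le_s :: "('a::metric_space \<times> real) \<Rightarrow> ('a \<times> real) \<Rightarrow> bool" where
  "le_s w2 w1 \<longleftrightarrow> snd w2 + dist (fst w1) (fst w2) \<le> snd w1"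

definition bob_legal ::
  "'a::metric_space set \<Rightarrow> real \<Rightarrow> real \<Rightarrow> (nat \<Rightarrow> 'a \<times> real) \<Rightarrow> (nat \<Rightarrow> 'a \<times> real) \<Rightarrow> nat \<Rightarrow> bool" where
  "bob_legal K \<alpha> \<beta> \<omega> A k \<longleftrightarrow>
     fst (\<omega> 0) \<in> K \<and> snd (\<omega> 0) > 0 \<and>
     (\<forall>j<k. fst (\<omega> (Suc j)) \<in> K \<and> snd (\<omega> (Suc j)) = \<beta> * snd (A j) \<and> le_s (\<omega> (Suc j)) (A j))"

text \<open>Schmidt's (alpha,beta)-game on K: Alice's strategy maps the history of
  Bob's moves omega_1..omega_k to her move omega'_k (her own earlier moves are
  determined by the strategy).\<close>
definition alpha_beta_winning :: "'a::metric_space set \<Rightarrow> real \<Rightarrow> real \<Rightarrow> 'a set \<Rightarrow> bool" where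
  "alpha_beta_winning K \<alpha> \<beta> S \<longleftrightarrow>
    (\<exists>\<sigma> :: ('a \<times> real) list \<Rightarrow> 'a \<times> real.
      \<forall>\<omega> :: nat \<Rightarrow> 'a \<times> real.
        (\<forall>k. bob_legal K \<alpha> \<beta> \<omega> (\<lambda>j. \<sigma> (map \<omega> [0..<Suc j])) k \<longrightarrow>
             (let a = \<sigma> (map \<omega> [0..<Suc k]) in
               fst a \<in> K \<and> snd a = \<alpha> * snd (\<omega> k) \<and> le_s a (\<omega> k))) \<and>
        ((\<forall>k. bob_legal K \<alpha> \<beta> \<omega> (\<lambda>j. \<sigma> (map \<omega> [0..<Suc j])) k) \<longrightarrow>
             (\<forall>x\<in>K. (\<forall>k. dist (fst (\<omega> k)) x \<le> snd (\<omega> k)) \<longrightarrow> x \<in> S)))"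

definition alpha_winning :: "'a::metric_space set \<Rightarrow> real \<Rightarrow> 'a set \<Rightarrow> bool" where
  "alpha_winning K \<alpha> S \<longleftrightarrow> (\<forall>\<beta>. 0 < \<beta> \<and> \<beta> < 1 \<longrightarrow> alpha_beta_winning K \<alpha> \<beta> S)"

definition affine_hyperplane :: "'a::euclidean_space set \<Rightarrow> bool" where
  "affine_hyperplane L \<longleftrightarrow> (\<exists>a b. a \<noteq> 0 \<and> L = {y. inner a y = b})"

definition locally_finite_borel :: "'a::euclidean_space measure \<Rightarrow> bool" where
  "locally_finite_borel \<mu> \<longleftrightarrow> sets \<mu> = sets borel \<and>
     (\<forall>x. \<exists>e>0. emeasure \<mu> (ball x e) < \<infinity>)"

definition measure_support :: "'a::euclidean_space measure \<Rightarrow> 'a set" where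
  "measure_support \<mu> = {x. \<forall>e>0. emeasure \<mu> (ball x e) > 0}"

definition abs_decaying :: "'a::euclidean_space measure \<Rightarrow> real \<Rightarrow> real \<Rightarrow> bool" where
  "abs_decaying \<mu> C \<gamma> \<longleftrightarrow> (\<exists>\<rho>0>0. \<forall>L x \<rho> \<epsilon>.
     affine_hyperplane L \<and> x \<in> measure_support \<mu> \<and> 0 < \<rho> \<and> \<rho> < \<rho>0 \<and> \<epsilon> > 0 \<longrightarrow>
     emeasure \<mu> (cball x \<rho> \<inter> {y. infdist y L \<le> \<epsilon>})
       < ennreal (C * (\<epsilon> / \<rho>) powr \<gamma>) * emeasure \<mu> (cball x \<rho>))"

end

theory Submission
  imports Defs "HOL-Library.Nat_Bijection"
begin

text \<open>
  Alice removes the countably many hyperplanes h 0, h 1, ... one at a time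
  while still following a winning strategy for S.  She plays the even-indexed rounds
  of the (alpha, beta)-game as a copy of an (alpha, alpha*beta*beta)-game for S (two
  rounds of the fine game contain one round of the coarse one), and in the odd round
  number 2m+1 she uses her move to dodge the hyperplane h i, where (i, n) is the pair
  encoded by m.  Since every i occurs with arbitrarily large m, she dodges each h i at
  arbitrarily small scales.  Dodging is possible because of absolute decay: inside the
  ball of radius R = (1 - alpha) r, the neighbourhood of width R / C^(1/gamma) of a
  hyperplane has strictly smaller measure than the ball, and this width exceeds alpha r
  exactly when alpha < 1 / (2 C^(1/gamma) + 1); so the ball contains a support point
  that Alice can take as her centre, with her whole ball missing the hyperplane.
\<close>

section \<open>Dodging a hyperplane with an absolutely decaying measure\<close>

text \<open>A Borel set of positive measure meets the support (second countability lets
  us cover the complement of the support by countably many null balls).\<close>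
lemma support_meets_positive_set:
  fixes \<mu> :: "'a::euclidean_space measure"
  assumes sets: "sets \<mu> = sets borel" and E: "E \<in> sets borel" and pos: "emeasure \<mu> E > 0"
  shows "\<exists>y\<in>E. y \<in> measure_support \<mu>"
proof (rule ccontr)
  assume "\<not> ?thesis"
  then have null_ball: "\<forall>y\<in>E. \<exists>e>0. emeasure \<mu> (ball y e) = 0"
    unfolding measure_support_def by (auto simp: not_less)
  define F where "F = {ball y e | y e. e > 0 \<and> emeasure \<mu> (ball y e) = 0}"
  have E_cover: "E \<subseteq> \<Union>F"
  proof
    fix y assume "y \<in> E"
    then obtain e where "e > 0" "emeasure \<mu> (ball y e) = 0" using null_ball by blast
    then have "ball y e \<in> F" unfolding F_def by blast
    then show "y \<in> \<Union>F" using \<open>e > 0\<close> by (meson UnionI centre_in_ball)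
  qed
  obtain F' where F': "F' \<subseteq> F" "countable F'" "\<Union>F' = \<Union>F"
    using Lindelof[of F] unfolding F_def by auto
  have "(\<Union>B\<in>F'. B) \<in> null_sets \<mu>"
  proof (rule null_sets_UN')
    show "countable F'" by fact
    fix B assume "B \<in> F'"
    then obtain y e where "B = ball y e" "emeasure \<mu> B = 0" using F' unfolding F_def by auto
    then show "B \<in> null_sets \<mu>" using sets by (auto simp: null_sets_def)
  qed
  then have "\<Union>F \<in> null_sets \<mu>" using F' by simp
  then have "E \<in> null_sets \<mu>"
    using E_cover E sets null_sets_subset by (metis sets.sets_into_space subsetI)
  then show False using pos by (simp add: null_setsD1)
qed

lemma closed_infdist_sublevel: "closed {y::'a::metric_space. infdist y L \<le> e}"
  using continuous_closed_vimage[of "{..e}" "\<lambda>x. infdist x L"]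
    continuous_infdist[OF continuous_ident, of _ UNIV L]
  by (auto simp: vimage_def)

lemma support_point_outside:
  fixes \<mu> :: "'a::euclidean_space measure"
  assumes sets: "sets \<mu> = sets borel" and N: "N \<in> sets borel"
    and less: "emeasure \<mu> (cball x R \<inter> N) < emeasure \<mu> (cball x R)"
  shows "\<exists>y\<in>measure_support \<mu>. dist x y \<le> R \<and> y \<notin> N"
proof -
  define E where "E = cball x R - N"
  have E: "E \<in> sets borel" unfolding E_def using N by auto
  have "cball x R = (cball x R \<inter> N) \<union> E" by (auto simp: E_def)
  then have "emeasure \<mu> (cball x R) \<le> emeasure \<mu> (cball x R \<inter> N) + emeasure \<mu> E"
    using N E sets by (metis emeasure_subadditive borel_closed closed_cball sets.Int)
  then have "emeasure \<mu> E > 0" using less by (metis add.right_neutral leD not_gr_zero)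
  then obtain y where "y \<in> E" "y \<in> measure_support \<mu>"
    using support_meets_positive_set[OF sets E] by blast
  then show ?thesis by (auto simp: E_def)
qed

text \<open>The numerology behind the bound on alpha: with R = (1 - alpha) r and
  epsilon = R / C^(1/gamma), the decay estimate at scale R and width epsilon has
  constant exactly 1, while epsilon still exceeds Alice's radius alpha r.\<close>
lemma decay_scale_choice:
  fixes C \<gamma> \<alpha> r :: real
  assumes C: "C > 0" and \<gamma>: "\<gamma> > 0" and r: "r > 0"
    and \<alpha>: "0 < \<alpha>" "\<alpha> < 1 / (2 * C powr (1 / \<gamma>) + 1)"
  defines "R \<equiv> (1 - \<alpha>) * r" and "\<epsilon> \<equiv> (1 - \<alpha>) * r / C powr (1 / \<gamma>)"
  shows "\<alpha> < 1" and "0 < R" and "R \<le> r" and "\<alpha> * r < \<epsilon>"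
    and "C * (\<epsilon> / R) powr \<gamma> = 1"
proof -
  define c where "c = C powr (1 / \<gamma>)"
  have c: "c > 0" using C by (simp add: c_def)
  have "\<alpha> < 1 / (2 * c + 1)" using \<alpha>(2) by (simp add: c_def)
  then have "\<alpha> * (2 * c + 1) < 1"
    using c by (simp add: pos_less_divide_eq)
  moreover have \<alpha>c_pos: "0 < \<alpha> * c" using \<alpha>(1) c by simp
  ultimately have \<alpha>c: "\<alpha> * c < 1 - \<alpha>" by (simp add: algebra_simps)
  then show \<alpha>1: "\<alpha> < 1" using \<alpha>c_pos by linarith
  show "0 < R" using \<alpha>1 r by (simp add: R_def)
  show "R \<le> r" using \<alpha>(1) r by (simp add: R_def algebra_simps)
  have "\<alpha> * c * r < (1 - \<alpha>) * r" using \<alpha>c r by simp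
  then show "\<alpha> * r < \<epsilon>" using c by (simp add: \<epsilon>_def c_def[symmetric] field_simps)
  have "c powr \<gamma> = C" using C \<gamma> by (simp add: c_def powr_powr)
  then show "C * (\<epsilon> / R) powr \<gamma> = 1"
    using c C \<alpha>1 r by (simp add: \<epsilon>_def R_def c_def[symmetric] powr_divide)
qed

lemma decaying_measure_dodge:
  fixes \<mu> :: "'a::euclidean_space measure"
  assumes "locally_finite_borel \<mu>" and C: "C > 0" and \<gamma>: "\<gamma> > 0"
    and dec: "abs_decaying \<mu> C \<gamma>"
    and \<alpha>: "0 < \<alpha>" "\<alpha> < 1 / (2 * C powr (1 / \<gamma>) + 1)"
  obtains \<rho>0 where "\<rho>0 > 0" and
    "\<And>L x r. affine_hyperplane L \<Longrightarrow> x \<in> measure_support \<mu> \<Longrightarrow> 0 < r \<Longrightarrow> r < \<rho>0 \<Longrightarrow>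
       \<exists>y\<in>measure_support \<mu>. \<alpha> * r + dist x y \<le> r \<and> infdist y L > \<alpha> * r"
proof -
  have sets: "sets \<mu> = sets borel" using assms(1) by (simp add: locally_finite_borel_def)
  obtain \<rho>0 where \<rho>0: "\<rho>0 > 0" and decay: "\<And>L x \<rho> \<epsilon>. affine_hyperplane L \<Longrightarrow>
      x \<in> measure_support \<mu> \<Longrightarrow> 0 < \<rho> \<Longrightarrow> \<rho> < \<rho>0 \<Longrightarrow> \<epsilon> > 0 \<Longrightarrow>
      emeasure \<mu> (cball x \<rho> \<inter> {y. infdist y L \<le> \<epsilon>})
        < ennreal (C * (\<epsilon> / \<rho>) powr \<gamma>) * emeasure \<mu> (cball x \<rho>)"
    using dec unfolding abs_decaying_def by blast
  have dodge: "\<exists>y\<in>measure_support \<mu>. \<alpha> * r + dist x y \<le> r \<and> infdist y L > \<alpha> * r"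
    if L: "affine_hyperplane L" and x: "x \<in> measure_support \<mu>" and r: "0 < r" "r < \<rho>0"
    for L x r
  proof -
    define R where "R = (1 - \<alpha>) * r"
    define \<epsilon> where "\<epsilon> = (1 - \<alpha>) * r / C powr (1 / \<gamma>)"
    define N where "N = {y. infdist y L \<le> \<epsilon>}"
    note scale = decay_scale_choice[OF C \<gamma> r(1) \<alpha>, folded R_def \<epsilon>_def]
    have "0 < \<alpha> * r" using \<alpha>(1) r(1) by simp
    then have \<epsilon>: "0 < \<epsilon>" using scale(4) by linarith
    have R: "R < \<rho>0" using scale(3) r(2) by linarith
    have "emeasure \<mu> (cball x R \<inter> N) < ennreal (C * (\<epsilon> / R) powr \<gamma>) * emeasure \<mu> (cball x R)"
      unfolding N_def by (rule decay[OF L x scale(2) R \<epsilon>])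
    then have less: "emeasure \<mu> (cball x R \<inter> N) < emeasure \<mu> (cball x R)"
      by (simp add: scale(5))
    have N: "N \<in> sets borel" unfolding N_def by (rule borel_closed[OF closed_infdist_sublevel])
    obtain y where y: "y \<in> measure_support \<mu>" "dist x y \<le> R" "y \<notin> N"
      using support_point_outside[OF sets N less] by blast
    have "\<alpha> * r + dist x y \<le> r" using y(2) by (simp add: R_def algebra_simps)
    moreover have "infdist y L > \<alpha> * r" using y(3) scale(4) by (simp add: N_def)
    ultimately show ?thesis using y(1) by blast
  qed
  show ?thesis by (rule that[OF \<rho>0]) (fact dodge)
qed

definition alice_move :: "'a::metric_space set \<Rightarrow> real \<Rightarrow> 'a \<times> real \<Rightarrow> 'a \<times> real \<Rightarrow> bool" where
  "alice_move K \<alpha> w a \<longleftrightarrow> fst a \<in> K \<and> snd a = \<alpha> * snd w \<and> le_s a w"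

definition response :: "(('a \<times> real) list \<Rightarrow> 'b) \<Rightarrow> (nat \<Rightarrow> 'a \<times> real) \<Rightarrow> nat \<Rightarrow> 'b" where
  "response \<sigma> \<omega> = (\<lambda>k. \<sigma> (map \<omega> [0..<Suc k]))"

definition winning_strategy ::
  "'a::metric_space set \<Rightarrow> real \<Rightarrow> real \<Rightarrow> 'a set \<Rightarrow> (('a \<times> real) list \<Rightarrow> 'a \<times> real) \<Rightarrow> bool" where
  "winning_strategy K \<alpha> \<beta> S \<sigma> \<longleftrightarrow> (\<forall>\<omega>.
     (\<forall>k. bob_legal K \<alpha> \<beta> \<omega> (response \<sigma> \<omega>) k \<longrightarrow> alice_move K \<alpha> (\<omega> k) (response \<sigma> \<omega> k)) \<and>
     ((\<forall>k. bob_legal K \<alpha> \<beta> \<omega> (response \<sigma> \<omega>) k) \<longrightarrow>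
        (\<forall>x\<in>K. (\<forall>k. dist (fst (\<omega> k)) x \<le> snd (\<omega> k)) \<longrightarrow> x \<in> S)))"

lemma alpha_beta_winning_iff_strategy:
  "alpha_beta_winning K \<alpha> \<beta> S \<longleftrightarrow> (\<exists>\<sigma>. winning_strategy K \<alpha> \<beta> S \<sigma>)"
  unfolding alpha_beta_winning_def winning_strategy_def alice_move_def response_def Let_def ..

lemma winning_strategy_legal:
  "winning_strategy K \<alpha> \<beta> S \<sigma> \<Longrightarrow> bob_legal K \<alpha> \<beta> \<omega> (response \<sigma> \<omega>) k \<Longrightarrow>
     alice_move K \<alpha> (\<omega> k) (response \<sigma> \<omega> k)"
  unfolding winning_strategy_def by blast

lemma winning_strategy_wins:
  "winning_strategy K \<alpha> \<beta> S \<sigma> \<Longrightarrow> (\<forall>k. bob_legal K \<alpha> \<beta> \<omega> (response \<sigma> \<omega>) k) \<Longrightarrow>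
     x \<in> K \<Longrightarrow> (\<forall>k. dist (fst (\<omega> k)) x \<le> snd (\<omega> k)) \<Longrightarrow> x \<in> S"
  unfolding winning_strategy_def by blast

lemma le_s_trans: "le_s a b \<Longrightarrow> le_s b c \<Longrightarrow> le_s (a::'a::metric_space \<times> real) c"
  unfolding le_s_def using dist_triangle[of "fst c" "fst a" "fst b"] by (simp add: dist_commute)

lemma bob_legal_mono: "bob_legal K \<alpha> \<beta> \<omega> A k \<Longrightarrow> j \<le> k \<Longrightarrow> bob_legal K \<alpha> \<beta> \<omega> A j"
  by (auto simp: bob_legal_def)

lemma bob_legal_SucD:
  "bob_legal K \<alpha> \<beta> \<omega> A (Suc j) \<Longrightarrow>
     fst (\<omega> (Suc j)) \<in> K \<and> snd (\<omega> (Suc j)) = \<beta> * snd (A j) \<and> le_s (\<omega> (Suc j)) (A j)"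
  by (simp add: bob_legal_def)

lemma bob_legal_even_subgame:
  assumes bob: "bob_legal K \<alpha> \<beta> \<omega> A (2*m)"
    and odd_moves: "\<forall>j<m. alice_move K \<alpha> (\<omega> (Suc (2*j))) (A (Suc (2*j)))"
  shows "bob_legal K \<alpha> (\<alpha>*\<beta>*\<beta>) (\<lambda>i. \<omega> (2*i)) (\<lambda>i. A (2*i)) m"
  unfolding bob_legal_def
proof (intro conjI allI impI)
  show "fst (\<omega> (2*0)) \<in> K" "0 < snd (\<omega> (2*0))" using bob by (auto simp: bob_legal_def)
  fix j assume j: "j < m"
  have second: "fst (\<omega> (Suc (Suc (2*j)))) \<in> K"
      "snd (\<omega> (Suc (Suc (2*j)))) = \<beta> * snd (A (Suc (2*j)))"
      "le_s (\<omega> (Suc (Suc (2*j)))) (A (Suc (2*j)))"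
    using bob_legal_SucD[OF bob_legal_mono[OF bob, of "Suc (Suc (2*j))"]] j by auto
  have first: "snd (\<omega> (Suc (2*j))) = \<beta> * snd (A (2*j))" "le_s (\<omega> (Suc (2*j))) (A (2*j))"
    using bob_legal_SucD[OF bob_legal_mono[OF bob, of "Suc (2*j)"]] j by auto
  have alice: "alice_move K \<alpha> (\<omega> (Suc (2*j))) (A (Suc (2*j)))" using odd_moves j by blast
  show "fst (\<omega> (2 * Suc j)) \<in> K" using second by simp
  show "snd (\<omega> (2 * Suc j)) = \<alpha>*\<beta>*\<beta> * snd (A (2*j))"
    using second first alice by (simp add: alice_move_def)
  have "le_s (A (Suc (2*j))) (\<omega> (Suc (2*j)))" using alice by (simp add: alice_move_def)
  then show "le_s (\<omega> (2 * Suc j)) (A (2*j))"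
    using le_s_trans[OF second(3) le_s_trans[OF _ first(2)]] by simp
qed

section \<open>The interleaved strategy\<close>

text \<open>Even rounds follow sigma on the even-indexed subgame; round 2m+1 applies the
  dodging map D for the hyperplane index encoded by m to Bob's current ball.\<close>
definition interleave ::
  "(('a \<times> real) list \<Rightarrow> 'a \<times> real) \<Rightarrow> (nat \<Rightarrow> 'a \<times> real \<Rightarrow> 'a \<times> real) \<Rightarrow> ('a \<times> real) list \<Rightarrow> 'a \<times> real"
  where
  "interleave \<sigma> D ws = (if even (length ws - 1)
      then \<sigma> (map (\<lambda>j. ws ! (2*j)) [0..<Suc ((length ws - 1) div 2)])
      else D (fst (prod_decode ((length ws - 1) div 2))) (ws ! (length ws - 1)))"

lemma response_interleave_even:
  "response (interleave \<sigma> D) \<omega> (2*m) = response \<sigma> (\<lambda>i. \<omega> (2*i)) m"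
proof -
  have evens: "map (\<lambda>j. map \<omega> [0..<Suc (2*m)] ! (2*j)) [0..<Suc m] = map (\<lambda>i. \<omega> (2*i)) [0..<Suc m]"
    by (rule map_cong) (auto simp del: upt_Suc)
  have "response (interleave \<sigma> D) \<omega> (2*m) = \<sigma> (map (\<lambda>j. map \<omega> [0..<Suc (2*m)] ! (2*j)) [0..<Suc m])"
    unfolding response_def interleave_def by (simp del: upt_Suc)
  then show ?thesis by (simp only: evens response_def)
qed

lemma response_interleave_odd:
  "response (interleave \<sigma> D) \<omega> (Suc (2*m)) = D (fst (prod_decode m)) (\<omega> (Suc (2*m)))"
  unfolding response_def interleave_def by (simp del: upt_Suc)

lemma response_interleave_subgame:
  "(\<lambda>i. response (interleave \<sigma> D) \<omega> (2*i)) = response \<sigma> (\<lambda>i. \<omega> (2*i))"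
  using response_interleave_even by blast

lemma interleave_legal:
  assumes \<sigma>: "winning_strategy K \<alpha> (\<alpha>*\<beta>*\<beta>) S \<sigma>"
    and D: "\<And>i p. fst p \<in> K \<Longrightarrow> 0 < snd p \<Longrightarrow> alice_move K \<alpha> p (D i p)"
    and \<alpha>\<beta>: "0 < \<alpha>" "0 < \<beta>"
    and bob: "bob_legal K \<alpha> \<beta> \<omega> (response (interleave \<sigma> D) \<omega>) k"
  shows "\<forall>j\<le>k. 0 < snd (\<omega> j) \<and> alice_move K \<alpha> (\<omega> j) (response (interleave \<sigma> D) \<omega> j)"
  using bob
proof (induction k)
  let ?A = "response (interleave \<sigma> D) \<omega>"
  have even_move: "alice_move K \<alpha> (\<omega> (2*m)) (?A (2*m))"
    if "bob_legal K \<alpha> \<beta> \<omega> ?A (2*m)" "\<forall>j<2*m. alice_move K \<alpha> (\<omega> j) (?A j)" for m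
  proof -
    have "bob_legal K \<alpha> (\<alpha>*\<beta>*\<beta>) (\<lambda>i. \<omega> (2*i)) (response \<sigma> (\<lambda>i. \<omega> (2*i))) m"
      using bob_legal_even_subgame[OF that(1)] that(2)
      unfolding response_interleave_subgame by simp
    then show ?thesis
      using winning_strategy_legal[OF \<sigma>] unfolding response_interleave_even by blast
  qed
  {
    case 0
    then show ?case using even_move[of 0] by (simp add: bob_legal_def)
  next
    case (Suc k)
    have IH: "\<forall>j\<le>k. 0 < snd (\<omega> j) \<and> alice_move K \<alpha> (\<omega> j) (?A j)"
      using Suc bob_legal_mono[of K \<alpha> \<beta> \<omega> ?A "Suc k" k] by simp
    have bob_k: "fst (\<omega> (Suc k)) \<in> K" "snd (\<omega> (Suc k)) = \<beta> * snd (?A k)"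
      using bob_legal_SucD[OF Suc.prems] by auto
    have pos: "0 < snd (\<omega> (Suc k))" using bob_k IH \<alpha>\<beta> by (simp add: alice_move_def)
    have "alice_move K \<alpha> (\<omega> (Suc k)) (?A (Suc k))"
    proof (cases "even (Suc k)")
      case True
      then obtain m where m: "Suc k = 2*m" by (metis dvdE)
      have "\<forall>j<2*m. alice_move K \<alpha> (\<omega> j) (?A j)" using IH m by auto
      then show ?thesis using even_move[of m] Suc.prems m by simp
    next
      case False
      then obtain m where m: "Suc k = Suc (2*m)" by (metis oddE add.commute plus_1_eq_Suc)
      have "?A (Suc k) = D (fst (prod_decode m)) (\<omega> (Suc k))"
        using response_interleave_odd[of \<sigma> D \<omega> m] m by simp
      then show ?thesis using D[OF bob_k(1) pos] by simp
    qed
    then show ?case using IH pos by (auto simp: le_Suc_eq)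
  }
qed

lemma legal_play_radius:
  assumes bob: "\<forall>k. bob_legal K \<alpha> \<beta> \<omega> A k" and alice: "\<forall>j. alice_move K \<alpha> (\<omega> j) (A j)"
  shows "snd (\<omega> j) = snd (\<omega> 0) * (\<alpha>*\<beta>)^j"
proof (induction j)
  case (Suc j)
  then show ?case
    using bob_legal_SucD[of K \<alpha> \<beta> \<omega> A j] bob alice by (simp add: alice_move_def)
qed simp

lemma dodged_set_excluded:
  assumes "le_s w a" "dist (fst w) x \<le> snd w" "infdist (fst a) L > snd a"
  shows "x \<notin> L"
proof
  assume "x \<in> L"
  then have "infdist (fst a) L \<le> dist (fst a) x" by (rule infdist_le)
  also have "\<dots> \<le> snd a"
    using assms(1,2) dist_triangle[of "fst a" x "fst w"] unfolding le_s_def by linarith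
  finally show False using assms(3) by simp
qed

lemma dodging_round_late: "\<exists>m. fst (prod_decode m) = i \<and> n \<le> Suc (2*m)"
proof (intro exI conjI)
  show "fst (prod_decode (prod_encode (i, n))) = i" by simp
  show "n \<le> Suc (2 * prod_encode (i, n))" using le_prod_encode_2[of n i] by simp
qed

lemma interleave_winning:
  assumes \<alpha>: "0 < \<alpha>" "\<alpha> < 1" and \<beta>: "0 < \<beta>" "\<beta> < 1" and \<rho>: "\<rho> > 0"
    and \<sigma>: "winning_strategy K \<alpha> (\<alpha>*\<beta>*\<beta>) S \<sigma>"
    and D_legal: "\<And>i p. fst p \<in> K \<Longrightarrow> 0 < snd p \<Longrightarrow> alice_move K \<alpha> p (D i p)"
    and D_dodge: "\<And>i p. fst p \<in> K \<Longrightarrow> 0 < snd p \<Longrightarrow> snd p < \<rho> \<Longrightarrow>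
                    infdist (fst (D i p)) (h i) > \<alpha> * snd p"
  shows "winning_strategy K \<alpha> \<beta> (S - \<Union>(range h)) (interleave \<sigma> D)"
  unfolding winning_strategy_def
proof (intro allI conjI impI ballI)
  fix \<omega> :: "nat \<Rightarrow> 'a \<times> real" and k
  let ?A = "response (interleave \<sigma> D) \<omega>"
  have legal: "\<forall>j\<le>k. 0 < snd (\<omega> j) \<and> alice_move K \<alpha> (\<omega> j) (?A j)"
    if "bob_legal K \<alpha> \<beta> \<omega> ?A k" for k
    by (rule interleave_legal[OF \<sigma> _ \<alpha>(1) \<beta>(1) that]) (fact D_legal)
  show "alice_move K \<alpha> (\<omega> k) (?A k)" if "bob_legal K \<alpha> \<beta> \<omega> ?A k"
    using legal[OF that] by blast
  fix x assume bob: "\<forall>k. bob_legal K \<alpha> \<beta> \<omega> ?A k" and x: "x \<in> K"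
    and in_balls: "\<forall>k. dist (fst (\<omega> k)) x \<le> snd (\<omega> k)"
  have alice: "0 < snd (\<omega> j) \<and> alice_move K \<alpha> (\<omega> j) (?A j)" for j using legal bob by blast
  then have alice_moves: "\<forall>j. alice_move K \<alpha> (\<omega> j) (?A j)" by blast
  have "bob_legal K \<alpha> (\<alpha>*\<beta>*\<beta>) (\<lambda>i. \<omega> (2*i)) (response \<sigma> (\<lambda>i. \<omega> (2*i))) m" for m
    using bob_legal_even_subgame[of K \<alpha> \<beta> \<omega> ?A m] bob alice_moves
    unfolding response_interleave_subgame by blast
  then have "x \<in> S" using winning_strategy_wins[OF \<sigma>] x in_balls by blast
  moreover have "x \<notin> h i" for i
  proof -
    have \<alpha>\<beta>: "0 < \<alpha>*\<beta>" "\<alpha>*\<beta> < 1" using \<alpha> \<beta> mult_strict_mono[of \<alpha> 1 \<beta> 1] by auto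
    have r0: "0 < snd (\<omega> 0)" using alice by blast
    obtain n where n: "(\<alpha>*\<beta>)^n < \<rho> / snd (\<omega> 0)"
      using real_arch_pow_inv[of "\<rho> / snd (\<omega> 0)" "\<alpha>*\<beta>"] \<rho> r0 \<alpha>\<beta> by auto
    obtain m where m: "fst (prod_decode m) = i" "n \<le> Suc (2*m)" using dodging_round_late by blast
    define j where "j = Suc (2*m)"
    have "snd (\<omega> j) = snd (\<omega> 0) * (\<alpha>*\<beta>)^j"
      by (rule legal_play_radius[OF bob alice_moves])
    also have "\<dots> \<le> snd (\<omega> 0) * (\<alpha>*\<beta>)^n"
      using r0 \<alpha>\<beta> m(2) by (intro mult_left_mono power_decreasing) (auto simp: j_def)
    also have "\<dots> < \<rho>" using n r0 by (simp add: pos_less_divide_eq mult.commute)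
    finally have small: "snd (\<omega> j) < \<rho>" .
    have in_K: "fst (\<omega> j) \<in> K" using bob_legal_SucD[of K \<alpha> \<beta> \<omega> ?A "2*m"] bob by (simp add: j_def)
    have far: "infdist (fst (?A j)) (h i) > snd (?A j)"
      using D_dodge[OF in_K _ small, of i] alice[of j] response_interleave_odd[of \<sigma> D \<omega> m] m(1)
      by (simp add: j_def alice_move_def)
    have "le_s (\<omega> (Suc j)) (?A j)" using bob_legal_SucD[of K \<alpha> \<beta> \<omega> ?A j] bob by blast
    then show ?thesis using dodged_set_excluded in_balls far by blast
  qed
  ultimately show "x \<in> S - \<Union>(range h)" by auto
qed

text \<open>Pointwise dodging moves assemble into a dodging map, which outside its scale
  range simply shrinks Bob's ball about its centre.\<close>
lemma dodging_map:
  assumes \<alpha>: "\<alpha> \<le> 1"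
    and dodge: "\<And>i p. fst p \<in> K \<Longrightarrow> 0 < snd p \<Longrightarrow> snd p < \<rho> \<Longrightarrow>
                  \<exists>y\<in>K. \<alpha> * snd p + dist (fst p) y \<le> snd p \<and> infdist y (h i) > \<alpha> * snd p"
  obtains D where "\<And>i p. fst p \<in> K \<Longrightarrow> 0 < snd p \<Longrightarrow> alice_move K \<alpha> p (D i p)"
    and "\<And>i p. fst p \<in> K \<Longrightarrow> 0 < snd p \<Longrightarrow> snd p < \<rho> \<Longrightarrow> infdist (fst (D i p)) (h i) > \<alpha> * snd p"
proof -
  have "\<exists>a. fst p \<in> K \<longrightarrow> 0 < snd p \<longrightarrow>
          alice_move K \<alpha> p a \<and> (snd p < \<rho> \<longrightarrow> infdist (fst a) (h i) > \<alpha> * snd p)" for i p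
  proof (cases "fst p \<in> K \<and> 0 < snd p \<and> snd p < \<rho>")
    case True
    then obtain y where "y \<in> K" "\<alpha> * snd p + dist (fst p) y \<le> snd p" "infdist y (h i) > \<alpha> * snd p"
      using dodge by blast
    then show ?thesis by (intro exI[of _ "(y, \<alpha> * snd p)"]) (simp add: alice_move_def le_s_def)
  next
    case False
    have "0 < snd p \<longrightarrow> \<alpha> * snd p \<le> snd p" using \<alpha> by (simp add: mult_left_le_one_le)
    then show ?thesis using False
      by (intro exI[of _ "(fst p, \<alpha> * snd p)"]) (auto simp: alice_move_def le_s_def)
  qed
  then have "\<forall>i. \<exists>Di. \<forall>p. fst p \<in> K \<longrightarrow> 0 < snd p \<longrightarrow>
      alice_move K \<alpha> p (Di p) \<and> (snd p < \<rho> \<longrightarrow> infdist (fst (Di p)) (h i) > \<alpha> * snd p)"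
    by (intro allI choice)
  then obtain D where "\<forall>i p. fst p \<in> K \<longrightarrow> 0 < snd p \<longrightarrow>
      alice_move K \<alpha> p (D i p) \<and> (snd p < \<rho> \<longrightarrow> infdist (fst (D i p)) (h i) > \<alpha> * snd p)"
    by (rule choice[THEN exE])
  then show ?thesis using that by blast
qed

section \<open>Removing countably many hyperplanes\<close>

lemma hyperplane_dodging_map:
  fixes \<mu> :: "'a::euclidean_space measure" and h :: "nat \<Rightarrow> 'a set"
  assumes "locally_finite_borel \<mu>" and "C > 0" and "\<gamma> > 0" and "abs_decaying \<mu> C \<gamma>"
    and "0 < \<alpha>" and "\<alpha> < 1 / (2 * C powr (1 / \<gamma>) + 1)"
    and hyp: "\<And>i. affine_hyperplane (h i)"
  obtains \<rho> D where "\<rho> > 0"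
    and "\<And>i p. fst p \<in> measure_support \<mu> \<Longrightarrow> 0 < snd p \<Longrightarrow>
           alice_move (measure_support \<mu>) \<alpha> p (D i p)"
    and "\<And>i p. fst p \<in> measure_support \<mu> \<Longrightarrow> 0 < snd p \<Longrightarrow> snd p < \<rho> \<Longrightarrow>
           infdist (fst (D i p)) (h i) > \<alpha> * snd p"
proof -
  let ?K = "measure_support \<mu>"
  have \<alpha>1: "\<alpha> \<le> 1" using decay_scale_choice(1)[OF assms(2,3) zero_less_one assms(5,6)] by simp
  obtain \<rho> where \<rho>: "\<rho> > 0" and dodge: "\<And>L x r. affine_hyperplane L \<Longrightarrow> x \<in> ?K \<Longrightarrow>
      0 < r \<Longrightarrow> r < \<rho> \<Longrightarrow> \<exists>y\<in>?K. \<alpha> * r + dist x y \<le> r \<and> infdist y L > \<alpha> * r"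
    by (rule decaying_measure_dodge[OF assms(1-6)]) (rule that)
  have dodge_h: "\<exists>y\<in>?K. \<alpha> * snd p + dist (fst p) y \<le> snd p \<and> infdist y (h i) > \<alpha> * snd p"
    if "fst p \<in> ?K" "0 < snd p" "snd p < \<rho>" for i p
    by (rule dodge[OF hyp that])
  show ?thesis by (rule dodging_map[of \<alpha> ?K \<rho> h, OF \<alpha>1]) (fact dodge_h, rule that[OF \<rho>])
qed

theorem corollary3p3:
  fixes \<mu> :: "'a::euclidean_space measure" and C \<gamma> \<alpha> :: real
    and S S' :: "'a set" and H :: "'a set set"
  assumes "locally_finite_borel \<mu>"
    and "C > 0" and "\<gamma> > 0"
    and "abs_decaying \<mu> C \<gamma>"
    and "0 < \<alpha>" and "\<alpha> < 1 / (2 * C powr (1 / \<gamma>) + 1)"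
    and "alpha_winning (measure_support \<mu>) \<alpha> S"
    and "countable H" and "\<forall>L\<in>H. affine_hyperplane L"
    and "S' = S \<inter> \<Union>H"
  shows "alpha_winning (measure_support \<mu>) \<alpha> (S - S')"
proof (cases "H = {}")
  case True
  then show ?thesis using assms(7,10) by simp
next
  case False
  let ?K = "measure_support \<mu>"
  define h where "h = from_nat_into H"
  have range_h: "range h = H" using False assms(8) by (simp add: h_def)
  have hyp: "affine_hyperplane (h i)" for i using range_h assms(9) by auto
  have \<alpha>1: "\<alpha> < 1" using decay_scale_choice(1)[OF assms(2,3) zero_less_one assms(5,6)] .
  obtain \<rho> D where \<rho>: "\<rho> > 0"
    and D_legal: "\<And>i p. fst p \<in> ?K \<Longrightarrow> 0 < snd p \<Longrightarrow> alice_move ?K \<alpha> p (D i p)"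
    and D_dodge: "\<And>i p. fst p \<in> ?K \<Longrightarrow> 0 < snd p \<Longrightarrow> snd p < \<rho> \<Longrightarrow>
                    infdist (fst (D i p)) (h i) > \<alpha> * snd p"
    by (rule hyperplane_dodging_map[OF assms(1-6) hyp]) (rule that)
  show ?thesis unfolding alpha_winning_def
  proof (intro allI impI)
    fix \<beta> :: real assume \<beta>: "0 < \<beta> \<and> \<beta> < 1"
    have "0 < \<alpha>*\<beta>*\<beta>" "\<alpha>*\<beta>*\<beta> < 1" using \<beta> assms(5) \<alpha>1
        mult_strict_mono[of \<alpha> 1 \<beta> 1] mult_strict_mono[of "\<alpha>*\<beta>" 1 \<beta> 1] by auto
    then obtain \<sigma> where \<sigma>: "winning_strategy ?K \<alpha> (\<alpha>*\<beta>*\<beta>) S \<sigma>"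
      using assms(7) unfolding alpha_winning_def alpha_beta_winning_iff_strategy by blast
    have "winning_strategy ?K \<alpha> \<beta> (S - \<Union>(range h)) (interleave \<sigma> D)"
    proof (rule interleave_winning[OF assms(5) \<alpha>1 _ _ \<rho> \<sigma>])
      show "0 < \<beta>" "\<beta> < 1" using \<beta> by auto
    qed (fact D_legal, fact D_dodge)
    moreover have "S - S' = S - \<Union>(range h)" using range_h assms(10) by auto
    ultimately show "alpha_beta_winning ?K \<alpha> \<beta> (S - S')"
      unfolding alpha_beta_winning_iff_strategy by (intro exI[of _ "interleave \<sigma> D"]) simp
  qed
qed

end
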